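(* Let $\alpha,\beta,\gamma\in\mathbb{Z}[i]$ satisfy $\alpha^2+\beta^2+\gamma^2=0$, $\alpha\beta\gamma\neq 0$, and $\gcd(\alpha,\beta)\in U$. Then, after multiplying each of $\alpha,\beta,\gamma$ by a suitable unit and permuting the three coordinates, one obtains a triple $(X,Y,Z)$ satisfying $X^2+Y^2=Z^2$ with $X,Z\in O^I$, $Y=(1+i)^{2+a_1}p_2^{a_2}\cdots p_m^{a_m}$ (integers $a_j\ge 0$, $p_2,\dots,p_m$ distinct Gaussian primes lying in $O^I$), $\gcd(X,Y)\in U$ and $XYZ\neq 0$. Conversely, if $(X,Y,Z)\in\mathbb{Z}[i]^3$ satisfies $X^2+Y^2=Z^2$, $\gcd(X,Y)\in U$ and $XYZ\neq 0$, then $(X,Y,iZ)$ satisfies $X^2+Y^2+(iZ)^2=0$ with the same conditions.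
   Context: $\mathbb{Z}[i]$ is the ring of Gaussian integers, $U=\{1,-1,i,-i\}$ its unit group; for $\alpha\in\mathbb{Z}[i]$, $R(\alpha)$ and $I(\alpha)$ denote its real and imaginary parts. $\gcd(x,y)\in U$ means $x,y$ have no common non-unit divisor. $O=\{\alpha\in\mathbb{Z}[i]: R(\alpha)+I(\alpha)\equiv 1 \pmod 2\}$ is the set of odd Gaussian integers (those not divisible by $1+i$), and $O^I=\{\alpha\in O: R(\alpha)\equiv 1\pmod 4\}$. *)

theory Defs
  imports "HOL-Analysis.Analysis" "HOL-Library.Multiset"
begin

definition GI :: "complex set" where
  "GI = {z. Re z \<in> \<int> \<and> Im z \<in> \<int>}"

definition GU :: "complex set" where
  "GU = {1, -1, \<i>, -\<i>}"

definition gdvd :: "complex \<Rightarrow> complex \<Rightarrow> bool" where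
  "gdvd a b \<longleftrightarrow> (\<exists>c\<in>GI. b = a * c)"

text \<open>gcd(a,b) is a unit: every common divisor in Z[i] is a unit.\<close>
definition gcoprime :: "complex \<Rightarrow> complex \<Rightarrow> bool" where
  "gcoprime a b \<longleftrightarrow> (\<forall>d\<in>GI. gdvd d a \<and> gdvd d b \<longrightarrow> d \<in> GU)"

definition gprime :: "complex \<Rightarrow> bool" where
  "gprime p \<longleftrightarrow> p \<in> GI \<and> p \<noteq> 0 \<and> p \<notin> GU \<and>
     (\<forall>a\<in>GI. \<forall>b\<in>GI. gdvd p (a * b) \<longrightarrow> gdvd p a \<or> gdvd p b)"

definition GO :: "complex set" where
  "GO = {z \<in> GI. odd (\<lfloor>Re z\<rfloor> + \<lfloor>Im z\<rfloor>)}"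

definition GOI :: "complex set" where
  "GOI = {z \<in> GO. \<lfloor>Re z\<rfloor> mod 4 = 1}"

end

theory Submission
  imports Defs
begin

text \<open>Modulo 1 + i the equation forces exactly two of \<alpha>, \<beta>, \<gamma> to be odd, since coprimality
  excludes three even terms. Units move the odd terms into O^I, and the even term is
  (1 + i)^k times an odd element, which factorises as a unit times a product of
  primes from O^I. Imaginary parts modulo 4 rule out k = 1. Finally the squares of the units
  used are signs, and real parts modulo 4 show that the two odd squares cannot carry the same sign;
  so the equation becomes X^2 + Y^2 = Z^2, after exchanging X and Z if necessary.\<close>

section \<open>Gaussian integers and their units\<close>

lemma GI_iff: "z \<in> GI \<longleftrightarrow> (\<exists>a b::int. z = Complex (of_int a) (of_int b))"
proof
  assume "z \<in> GI"
  then obtain a b where "Re z = of_int a" "Im z = of_int b"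
    unfolding GI_def by (auto elim!: Ints_cases)
  then show "\<exists>a b::int. z = Complex (of_int a) (of_int b)" by (metis complex_surj)
qed (auto simp: GI_def)

lemma GI_cases:
  assumes "z \<in> GI" obtains a b :: int where "z = Complex (of_int a) (of_int b)"
  using assms GI_iff by blast

lemma GI_Complex [simp]: "Complex (of_int a) (of_int b) \<in> GI"
  using GI_iff by blast

lemma GI_add [simp]: "z \<in> GI \<Longrightarrow> w \<in> GI \<Longrightarrow> z + w \<in> GI"
  and GI_diff [simp]: "z \<in> GI \<Longrightarrow> w \<in> GI \<Longrightarrow> z - w \<in> GI"
  and GI_minus [simp]: "z \<in> GI \<Longrightarrow> - z \<in> GI"
  and GI_mult [simp]: "z \<in> GI \<Longrightarrow> w \<in> GI \<Longrightarrow> z * w \<in> GI"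
  and GI_1 [simp]: "1 \<in> GI"
  and GI_0 [simp]: "0 \<in> GI"
  and GI_i [simp]: "\<i> \<in> GI"
  and GI_numeral [simp]: "numeral n \<in> GI"
  unfolding GI_def by auto

lemma GI_power [simp]: "z \<in> GI \<Longrightarrow> z ^ n \<in> GI"
  by (induction n) auto

lemma GI_prod: "(\<And>x. x \<in> A \<Longrightarrow> f x \<in> GI) \<Longrightarrow> prod f A \<in> GI"
  by (induction A rule: infinite_finite_induct) auto

lemma GU_GI: "u \<in> GU \<Longrightarrow> u \<in> GI"
  unfolding GU_def by auto

lemma GU_nonzero: "u \<in> GU \<Longrightarrow> u \<noteq> 0"
  unfolding GU_def by auto

lemma GU_mult: "u \<in> GU \<Longrightarrow> v \<in> GU \<Longrightarrow> u * v \<in> GU"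
  unfolding GU_def by auto

lemma GU_inverse: "u \<in> GU \<Longrightarrow> \<exists>v\<in>GU. u * v = 1"
  unfolding GU_def by (auto intro: bexI[of _ 1] bexI[of _ "-1"] bexI[of _ "\<i>"] bexI[of _ "-\<i>"])

lemma GU_square: "u \<in> GU \<Longrightarrow> u\<^sup>2 = 1 \<or> u\<^sup>2 = -1"
  unfolding GU_def by (auto simp: power2_eq_square)

lemma GU_power4: "u \<in> GU \<Longrightarrow> u ^ 4 = 1"
  unfolding GU_def by auto

lemma one_plus_i_not_GU: "1 + \<i> \<notin> GU"
  unfolding GU_def by (auto simp: complex_eq_iff)

section \<open>Norm, division with remainder and Bezout\<close>

definition gnorm :: "complex \<Rightarrow> nat" where
  "gnorm z = nat (\<lfloor>Re z\<rfloor>\<^sup>2 + \<lfloor>Im z\<rfloor>\<^sup>2)"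

lemma gnorm_eq_cmod_square: "z \<in> GI \<Longrightarrow> real (gnorm z) = (cmod z)\<^sup>2"
  by (elim GI_cases) (simp add: gnorm_def cmod_def)

lemma gnorm_mult: "z \<in> GI \<Longrightarrow> w \<in> GI \<Longrightarrow> gnorm (z * w) = gnorm z * gnorm w"
proof -
  assume "z \<in> GI" "w \<in> GI"
  then have "real (gnorm (z * w)) = real (gnorm z * gnorm w)"
    by (simp add: gnorm_eq_cmod_square norm_mult power_mult_distrib)
  then show ?thesis
    by (simp only: of_nat_eq_iff)
qed

lemma gnorm_eq_0_iff: "z \<in> GI \<Longrightarrow> gnorm z = 0 \<longleftrightarrow> z = 0"
  using gnorm_eq_cmod_square by fastforce

lemma gnorm_one_plus_i: "gnorm (1 + \<i>) = 2"
  unfolding gnorm_def by simp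

lemma gnorm_eq_1_iff: "z \<in> GI \<Longrightarrow> gnorm z = 1 \<longleftrightarrow> z \<in> GU"
proof -
  assume "z \<in> GI"
  then obtain a b where z: "z = Complex (of_int a) (of_int b)" by (rule GI_cases)
  have "gnorm z = 1 \<longleftrightarrow> a\<^sup>2 + b\<^sup>2 = 1"
    unfolding gnorm_def z by (simp add: nat_eq_iff)
  also have "\<dots> \<longleftrightarrow> (a, b) \<in> {(1, 0), (-1, 0), (0, 1), (0, -1)}"
  proof
    assume sum: "a\<^sup>2 + b\<^sup>2 = 1"
    then have "a\<^sup>2 \<le> 1" "b\<^sup>2 \<le> 1"
      using zero_le_power2[of a] zero_le_power2[of b] by linarith+
    then have "\<bar>a\<bar> \<le> 1" "\<bar>b\<bar> \<le> 1"
      by (simp_all add: abs_square_le_1)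
    then have "a \<in> {-1, 0, 1}" "b \<in> {-1, 0, 1}"
      by auto
    then show "(a, b) \<in> {(1, 0), (-1, 0), (0, 1), (0, -1)}"
      using sum by auto
  qed auto
  also have "\<dots> \<longleftrightarrow> z \<in> GU"
    unfolding GU_def z by (auto simp: complex_eq_iff)
  finally show ?thesis .
qed

lemma gdvd_refl: "z \<in> GI \<Longrightarrow> gdvd z z"
  unfolding gdvd_def by (auto intro: bexI[of _ 1])

lemma gdvd_trans: "gdvd a b \<Longrightarrow> gdvd b c \<Longrightarrow> gdvd a c"
  unfolding gdvd_def by (metis GI_mult mult.assoc)

lemma gdvd_mult_right: "gdvd a b \<Longrightarrow> c \<in> GI \<Longrightarrow> gdvd a (b * c)"
  unfolding gdvd_def by (metis GI_mult mult.assoc)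

lemma gdvd_triv_left: "a \<in> GI \<Longrightarrow> c \<in> GI \<Longrightarrow> gdvd a (a * c)"
  unfolding gdvd_def by auto

lemma gdvd_add: "gdvd a b \<Longrightarrow> gdvd a c \<Longrightarrow> gdvd a (b + c)"
  unfolding gdvd_def by (metis GI_add distrib_left)

lemma gdvd_unit_mult_left:
  assumes u: "u \<in> GU" and "gdvd d a"
  shows "gdvd (u * d) a"
proof -
  obtain c where c: "c \<in> GI" "a = d * c"
    using \<open>gdvd d a\<close> unfolding gdvd_def by blast
  obtain v where v: "v \<in> GU" "u * v = 1"
    using GU_inverse u by blast
  have "a = (u * d) * (v * c)"
    using c(2) v(2) by (simp add: algebra_simps)
  moreover have "v * c \<in> GI"
    using c(1) v(1) GU_GI by simp
  ultimately show ?thesis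
    unfolding gdvd_def by blast
qed

lemma gdvd_unit_mult_right_cancel:
  assumes u: "u \<in> GU" and "gdvd d (u * a)"
  shows "gdvd d a"
proof -
  obtain v where v: "v \<in> GU" "u * v = 1"
    using GU_inverse u by blast
  have "gdvd d (u * a * v)"
    using \<open>gdvd d (u * a)\<close> v(1) GU_GI gdvd_mult_right by blast
  moreover have "u * a * v = a"
    using v(2) by (simp add: algebra_simps)
  ultimately show ?thesis
    by simp
qed

lemma gdvd_1_imp_GU:
  assumes d: "d \<in> GI" and "gdvd d 1"
  shows "d \<in> GU"
proof -
  obtain c where c: "c \<in> GI" "1 = d * c"
    using \<open>gdvd d 1\<close> unfolding gdvd_def by blast
  then have "gnorm d * gnorm c = 1"
    using gnorm_mult[OF d c(1)] by (simp add: gnorm_def)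
  then show ?thesis
    using gnorm_eq_1_iff d by simp
qed

lemma gcoprime_sym: "gcoprime a b \<Longrightarrow> gcoprime b a"
  unfolding gcoprime_def by blast

lemma gcoprime_unit_mult: "gcoprime a b \<Longrightarrow> u \<in> GU \<Longrightarrow> v \<in> GU \<Longrightarrow> gcoprime (u * a) (v * b)"
  unfolding gcoprime_def using gdvd_unit_mult_right_cancel by blast

lemma not_gcoprime_0_0: "\<not> gcoprime 0 0"
proof
  assume "gcoprime 0 0"
  moreover have "gdvd 2 0"
    unfolding gdvd_def by (auto intro: bexI[of _ 0])
  ultimately have "(2::complex) \<in> GU"
    unfolding gcoprime_def by simp
  then show False
    unfolding GU_def by (auto simp: complex_eq_iff)
qed

lemma GI_division_with_remainder:
  assumes a: "a \<in> GI" and b: "b \<in> GI" "b \<noteq> 0"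
  obtains q where "q \<in> GI" "gnorm (a - b * q) < gnorm b"
proof -
  define z where "z = a / b"
  define q where "q = Complex (of_int (round (Re z))) (of_int (round (Im z)))"
  have "\<bar>Re (z - q)\<bar> \<le> 1/2" "\<bar>Im (z - q)\<bar> \<le> 1/2"
    unfolding q_def using of_int_round_abs_le[of "Re z"] of_int_round_abs_le[of "Im z"]
    by (simp_all add: abs_minus_commute)
  then have "(Re (z - q))\<^sup>2 \<le> (1/2)\<^sup>2" "(Im (z - q))\<^sup>2 \<le> (1/2)\<^sup>2"
    by (metis abs_ge_zero power_mono power2_abs)+
  then have zq: "(cmod (z - q))\<^sup>2 \<le> 1/2"
    by (simp add: cmod_def power2_eq_square)
  have rem: "a - b * q = b * (z - q)"
    unfolding z_def using b(2) by (simp add: algebra_simps)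
  have "a - b * q \<in> GI"
    using a b by (simp add: q_def)
  then have "real (gnorm (a - b * q)) = (cmod (a - b * q))\<^sup>2"
    by (rule gnorm_eq_cmod_square)
  also have "\<dots> = (cmod b)\<^sup>2 * (cmod (z - q))\<^sup>2"
    unfolding rem by (simp add: norm_mult power_mult_distrib)
  also have "\<dots> \<le> (cmod b)\<^sup>2 * (1/2)"
    using zq by (intro mult_left_mono) auto
  also have "\<dots> < real (gnorm b)"
    using b by (simp add: gnorm_eq_cmod_square)
  finally have "gnorm (a - b * q) < gnorm b"
    by simp
  moreover have "q \<in> GI"
    by (simp add: q_def)
  ultimately show ?thesis
    using that by blast
qed

text \<open>The least-norm nonzero element of the ideal generated by a and b divides both of them,
  hence is a unit.\<close>

lemma gcoprime_bezout:
  assumes a: "a \<in> GI" and b: "b \<in> GI" and cop: "gcoprime a b"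
  obtains x y where "x \<in> GI" "y \<in> GI" "a * x + b * y = 1"
proof -
  define S where "S = {d. d \<noteq> 0 \<and> (\<exists>x\<in>GI. \<exists>y\<in>GI. d = a * x + b * y)}"
  have "a \<noteq> 0 \<or> b \<noteq> 0"
    using cop not_gcoprime_0_0 by auto
  moreover have "a = a * 1 + b * 0" "b = a * 0 + b * 1"
    by simp_all
  ultimately have "a \<in> S \<or> b \<in> S"
    unfolding S_def using GI_0 GI_1 by blast
  then obtain d where dS: "d \<in> S" and dmin: "\<And>e. e \<in> S \<Longrightarrow> gnorm d \<le> gnorm e"
    using ex_has_least_nat[of "\<lambda>d. d \<in> S" _ gnorm] by blast
  from dS obtain x y where xy: "x \<in> GI" "y \<in> GI" "d = a * x + b * y" "d \<noteq> 0"
    unfolding S_def by blast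
  have dGI: "d \<in> GI"
    using xy a b by auto
  have "gdvd d t" if t: "t = a \<or> t = b" for t
  proof -
    have tGI: "t \<in> GI"
      using t a b by auto
    obtain q where q: "q \<in> GI" "gnorm (t - d * q) < gnorm d"
      using GI_division_with_remainder[OF tGI dGI xy(4)] .
    have "\<exists>x'\<in>GI. \<exists>y'\<in>GI. t - d * q = a * x' + b * y'"
    proof (cases "t = a")
      case True
      then have "t - d * q = a * (1 - x * q) + b * (- (y * q))"
        using xy(3) by (simp add: algebra_simps)
      moreover have "1 - x * q \<in> GI" "- (y * q) \<in> GI"
        using xy q by simp_all
      ultimately show ?thesis
        by blast
    next
      case False
      then have "t - d * q = a * (- (x * q)) + b * (1 - y * q)"
        using t xy(3) by (simp add: algebra_simps)
      moreover have "- (x * q) \<in> GI" "1 - y * q \<in> GI"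
        using xy q by simp_all
      ultimately show ?thesis
        by blast
    qed
    moreover have "t - d * q \<notin> S"
      using dmin q(2) leD by blast
    ultimately have "t - d * q = 0"
      unfolding S_def by blast
    then show ?thesis
      unfolding gdvd_def using q(1) by auto
  qed
  then have "d \<in> GU"
    using cop dGI unfolding gcoprime_def by blast
  then obtain v where v: "v \<in> GU" "d * v = 1"
    using GU_inverse by blast
  have "a * (x * v) + b * (y * v) = 1"
    using v(2) xy(3) by (simp add: algebra_simps)
  moreover have "x * v \<in> GI" "y * v \<in> GI"
    using xy v GU_GI by simp_all
  ultimately show ?thesis
    using that by blast
qed

lemma gdvd_mult_cancel_gcoprime:
  assumes "a \<in> GI" "b \<in> GI" "c \<in> GI" "gcoprime a b" "gdvd a (b * c)"
  shows "gdvd a c"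
proof -
  obtain x y where xy: "x \<in> GI" "y \<in> GI" "a * x + b * y = 1"
    using gcoprime_bezout assms by blast
  have "c = a * (c * x) + (b * c) * y"
    using arg_cong[OF xy(3), of "\<lambda>t. c * t"] by (simp add: algebra_simps)
  moreover have "gdvd a (a * (c * x))"
    using assms xy by (simp add: gdvd_triv_left)
  moreover have "gdvd a ((b * c) * y)"
    using assms xy gdvd_mult_right by blast
  ultimately show ?thesis
    using gdvd_add by metis
qed

lemma gcoprime_sum_squares_zero:
  assumes abc: "a \<in> GI" "b \<in> GI" "c \<in> GI"
    and sum: "a\<^sup>2 + b\<^sup>2 + c\<^sup>2 = 0" and cop: "gcoprime a b"
  shows "gcoprime a c"
  unfolding gcoprime_def
proof (intro ballI impI)
  fix d assume d: "d \<in> GI" "gdvd d a \<and> gdvd d c"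
  obtain x y where xy: "x \<in> GI" "y \<in> GI" "a * x + b * y = 1"
    using gcoprime_bezout abc cop by blast
  have "1 = (a * x + b * y)\<^sup>2"
    using xy(3) by simp
  also have "\<dots> = a * (a * x\<^sup>2 + 2 * b * x * y) + b\<^sup>2 * y\<^sup>2"
    by (simp add: power2_eq_square algebra_simps)
  also have "b\<^sup>2 = (a\<^sup>2 + b\<^sup>2 + c\<^sup>2) - a\<^sup>2 - c\<^sup>2"
    by simp
  also have "\<dots> = - a\<^sup>2 - c\<^sup>2"
    using sum by simp
  finally have "1 = a * (a * x\<^sup>2 + 2 * b * x * y) + (- a\<^sup>2 - c\<^sup>2) * y\<^sup>2" .
  then have one: "1 = a * (a * x\<^sup>2 + 2 * b * x * y - a * y\<^sup>2) + c * (- c * y\<^sup>2)"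
    by algebra
  have "gdvd d (a * (a * x\<^sup>2 + 2 * b * x * y - a * y\<^sup>2))"
    by (intro gdvd_mult_right) (use d abc xy in auto)
  moreover have "gdvd d (c * (- c * y\<^sup>2))"
    by (intro gdvd_mult_right) (use d abc xy in auto)
  ultimately have "gdvd d 1"
    by (subst one) (rule gdvd_add)
  then show "d \<in> GU"
    using gdvd_1_imp_GU d by blast
qed

section \<open>Parity\<close>

lemma GO_GI: "z \<in> GO \<Longrightarrow> z \<in> GI"
  unfolding GO_def by auto

lemma GO_nonzero: "z \<in> GO \<Longrightarrow> z \<noteq> 0"
  unfolding GO_def by auto

lemma GOI_GO: "z \<in> GOI \<Longrightarrow> z \<in> GO"
  unfolding GOI_def by auto

lemma Complex_in_GO_iff: "Complex (of_int a) (of_int b) \<in> GO \<longleftrightarrow> odd (a + b)"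
  unfolding GO_def by simp

lemma Complex_in_GOI_iff: "Complex (of_int a) (of_int b) \<in> GOI \<longleftrightarrow> odd (a + b) \<and> a mod 4 = 1"
  unfolding GOI_def GO_def by simp

lemma one_plus_i_gdvd_Complex_iff: "gdvd (1 + \<i>) (Complex (of_int a) (of_int b)) \<longleftrightarrow> even (a + b)"
proof
  assume "gdvd (1 + \<i>) (Complex (of_int a) (of_int b))"
  then obtain c where c: "c \<in> GI" "Complex (of_int a) (of_int b) = (1 + \<i>) * c"
    unfolding gdvd_def by blast
  obtain x y where "c = Complex (of_int x) (of_int y)"
    using c(1) by (rule GI_cases)
  then have "a = x - y" "b = x + y"
    using c(2) by (simp_all add: complex_eq_iff)
  then show "even (a + b)"
    by simp
next
  assume "even (a + b)"
  then obtain k where k: "a + b = 2 * k"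
    by (rule evenE)
  have "Complex (of_int a) (of_int b) = (1 + \<i>) * Complex (of_int k) (of_int (b - k))"
    using k by (simp add: complex_eq_iff)
  then show "gdvd (1 + \<i>) (Complex (of_int a) (of_int b))"
    unfolding gdvd_def using GI_Complex by blast
qed

lemma GO_iff_not_one_plus_i_gdvd: "z \<in> GI \<Longrightarrow> z \<in> GO \<longleftrightarrow> \<not> gdvd (1 + \<i>) z"
  by (elim GI_cases) (simp add: Complex_in_GO_iff one_plus_i_gdvd_Complex_iff)

lemma GO_gdvd: "d \<in> GI \<Longrightarrow> gdvd d w \<Longrightarrow> w \<in> GO \<Longrightarrow> d \<in> GO"
  using GO_iff_not_one_plus_i_gdvd GO_GI gdvd_trans by blast

lemma GO_unit_mult_in_GOI:
  assumes "z \<in> GO"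
  obtains u where "u \<in> GU" "u * z \<in> GOI"
proof -
  obtain a b where z: "z = Complex (of_int a) (of_int b)"
    using assms GO_GI GI_cases by blast
  have odd: "odd (a + b)"
    using assms z Complex_in_GO_iff by simp
  have assoc: "1 * z = Complex (of_int a) (of_int b)" "-1 * z = Complex (of_int (-a)) (of_int (-b))"
    "-\<i> * z = Complex (of_int b) (of_int (-a))" "\<i> * z = Complex (of_int (-b)) (of_int a)"
    unfolding z by (simp_all add: complex_eq_iff)
  have "a mod 4 = 1 \<or> (-a) mod 4 = 1 \<or> b mod 4 = 1 \<or> (-b) mod 4 = 1"
    using odd by presburger
  then consider "a mod 4 = 1" | "(-a) mod 4 = 1" | "b mod 4 = 1" | "(-b) mod 4 = 1"
    by blast
  then show ?thesis
  proof cases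
    case 1
    then have "1 * z \<in> GOI"
      unfolding assoc(1) Complex_in_GOI_iff using odd by presburger
    then show ?thesis
      using that[of 1] unfolding GU_def by simp
  next
    case 2
    then have "-1 * z \<in> GOI"
      unfolding assoc(2) Complex_in_GOI_iff using odd by presburger
    then show ?thesis
      using that[of "-1"] unfolding GU_def by simp
  next
    case 3
    then have "-\<i> * z \<in> GOI"
      unfolding assoc(3) Complex_in_GOI_iff using odd by presburger
    then show ?thesis
      using that[of "-\<i>"] unfolding GU_def by simp
  next
    case 4
    then have "\<i> * z \<in> GOI"
      unfolding assoc(4) Complex_in_GOI_iff using odd by presburger
    then show ?thesis
      using that[of "\<i>"] unfolding GU_def by simp
  qed
qed

lemma GI_one_plus_i_power_decomposition:
  assumes "z \<in> GI" "z \<noteq> 0"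
  obtains k w where "w \<in> GO" "z = (1 + \<i>) ^ k * w"
  using assms
proof (induction "gnorm z" arbitrary: z thesis rule: less_induct)
  case less
  show ?case
  proof (cases "z \<in> GO")
    case True
    then show ?thesis
      using less.prems(1)[of z 0] by simp
  next
    case False
    then obtain z' where z': "z' \<in> GI" "z = (1 + \<i>) * z'"
      using GO_iff_not_one_plus_i_gdvd less.prems(2) unfolding gdvd_def by blast
    then have "z' \<noteq> 0"
      using less.prems(3) by auto
    then have "gnorm z' \<noteq> 0"
      using gnorm_eq_0_iff z'(1) by simp
    moreover have "gnorm z = 2 * gnorm z'"
      using z' gnorm_mult gnorm_one_plus_i by simp
    ultimately have "gnorm z' < gnorm z"
      by simp
    then obtain k w where "w \<in> GO" "z' = (1 + \<i>) ^ k * w"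
      using less.hyps z' \<open>z' \<noteq> 0\<close> by blast
    then show ?thesis
      using less.prems(1)[of w "Suc k"] z' by (simp add: algebra_simps)
  qed
qed

lemma sum_squares_zero_parity:
  assumes "x \<in> GI" "y \<in> GI" "z \<in> GI" "x\<^sup>2 + y\<^sup>2 + z\<^sup>2 = 0"
  shows "x \<in> GO \<longleftrightarrow> (y \<in> GO \<longleftrightarrow> z \<notin> GO)"
proof -
  obtain a b c d e f where xyz: "x = Complex (of_int a) (of_int b)"
    "y = Complex (of_int c) (of_int d)" "z = Complex (of_int e) (of_int f)"
    using assms(1-3) by (elim GI_cases)
  have "real_of_int ((a\<^sup>2 - b\<^sup>2) + (c\<^sup>2 - d\<^sup>2) + (e\<^sup>2 - f\<^sup>2)) = Re (x\<^sup>2 + y\<^sup>2 + z\<^sup>2)"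
    unfolding xyz by (simp add: power2_eq_square)
  also have "\<dots> = 0"
    using assms(4) by simp
  finally have "(a\<^sup>2 - b\<^sup>2) + (c\<^sup>2 - d\<^sup>2) + (e\<^sup>2 - f\<^sup>2) = 0"
    by (simp only: of_int_eq_0_iff)
  then have "even ((a\<^sup>2 - b\<^sup>2) + (c\<^sup>2 - d\<^sup>2) + (e\<^sup>2 - f\<^sup>2))"
    by simp
  then have "even ((a + b) + (c + d) + (e + f))"
    by auto
  then show ?thesis
    unfolding xyz Complex_in_GO_iff by auto
qed

section \<open>Factorisation of odd elements into primes of O^I\<close>

lemma gdvd_gnorm_le_imp_gdvd:
  assumes d: "d \<in> GI" and p: "p \<in> GI" "p \<noteq> 0" and "gdvd d p" and le: "gnorm p \<le> gnorm d"
  shows "gdvd p d"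
proof -
  obtain e where e: "e \<in> GI" "p = d * e"
    using \<open>gdvd d p\<close> unfolding gdvd_def by blast
  have "gnorm p = gnorm d * gnorm e"
    using e gnorm_mult d by simp
  moreover have "gnorm d \<noteq> 0" "gnorm e \<noteq> 0"
    using gnorm_eq_0_iff d e p by auto
  ultimately have "gnorm e = 1"
    using le by simp
  then have "e \<in> GU"
    using gnorm_eq_1_iff e(1) by simp
  then obtain v where v: "v \<in> GU" "e * v = 1"
    using GU_inverse by blast
  have "d = p * v"
    using e(2) v(2) by (simp add: algebra_simps)
  then show ?thesis
    unfolding gdvd_def using v(1) GU_GI by blast
qed

text \<open>A nonunit divisor of least norm has no proper nonunit divisors, so it is coprime to
  everything it does not divide, and Euclid's lemma makes it prime.\<close>

lemma gprime_of_least_gnorm_divisor: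
  assumes w: "w \<in> GI" "w \<noteq> 0"
    and p: "p \<in> GI" "gdvd p w" "p \<notin> GU"
    and least: "\<And>d. d \<in> GI \<Longrightarrow> gdvd d w \<Longrightarrow> d \<notin> GU \<Longrightarrow> gnorm p \<le> gnorm d"
  shows "gprime p"
proof -
  have p0: "p \<noteq> 0"
    using p(2) w(2) unfolding gdvd_def by auto
  have "gdvd p b" if ab: "a \<in> GI" "b \<in> GI" "gdvd p (a * b)" "\<not> gdvd p a" for a b
  proof -
    have "gcoprime p a"
      unfolding gcoprime_def
    proof (intro ballI impI)
      fix d assume d: "d \<in> GI" "gdvd d p \<and> gdvd d a"
      show "d \<in> GU"
      proof (rule ccontr)
        assume "d \<notin> GU"
        then have "gnorm p \<le> gnorm d"
          using least d p gdvd_trans by blast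
        then have "gdvd p d"
          using gdvd_gnorm_le_imp_gdvd d p p0 by blast
        then show False
          using d ab(4) gdvd_trans by blast
      qed
    qed
    then show ?thesis
      using gdvd_mult_cancel_gcoprime p ab by blast
  qed
  then show ?thesis
    unfolding gprime_def using p p0 by blast
qed

lemma GO_nonunit_has_GOI_prime_factor:
  assumes w: "w \<in> GO" "w \<notin> GU"
  obtains p where "gprime p" "p \<in> GOI" "gdvd p w"
proof -
  define D where "D = {d \<in> GI. gdvd d w \<and> d \<notin> GU}"
  have "w \<in> D"
    unfolding D_def using w GO_GI gdvd_refl by auto
  then obtain q where "q \<in> D" and least: "\<And>d. d \<in> D \<Longrightarrow> gnorm q \<le> gnorm d"
    using ex_has_least_nat[of "\<lambda>d. d \<in> D" w gnorm] by blast
  then have q: "q \<in> GI" "gdvd q w" "q \<notin> GU"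
    unfolding D_def by auto
  then have "q \<in> GO"
    using GO_gdvd w(1) by blast
  then obtain v where v: "v \<in> GU" "v * q \<in> GOI"
    by (rule GO_unit_mult_in_GOI)
  have pGI: "v * q \<in> GI"
    using v(1) q(1) GU_GI by simp
  have gnorm_p: "gnorm (v * q) = gnorm q"
    using gnorm_mult v(1) q(1) GU_GI gnorm_eq_1_iff by simp
  have "gdvd (v * q) w"
    using gdvd_unit_mult_left v(1) q(2) by blast
  moreover have "v * q \<notin> GU"
    using gnorm_p gnorm_eq_1_iff[OF pGI] gnorm_eq_1_iff[OF q(1)] q(3) by simp
  ultimately have "gprime (v * q)"
    using gprime_of_least_gnorm_divisor[OF GO_GI[OF w(1)] GO_nonzero[OF w(1)] pGI]
      least gnorm_p unfolding D_def by simp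
  then show ?thesis
    using that v(2) \<open>gdvd (v * q) w\<close> by blast
qed

definition GOI_prime_product :: "complex \<Rightarrow> bool" where
  "GOI_prime_product w \<longleftrightarrow>
     (\<exists>P a. finite P \<and> (\<forall>p\<in>P. gprime p \<and> p \<in> GOI) \<and> w = (\<Prod>p\<in>P. p ^ a p))"

lemma GOI_prime_product_1: "GOI_prime_product 1"
  unfolding GOI_prime_product_def by (auto intro!: exI[of _ "{}"])

lemma GOI_prime_product_GI: "GOI_prime_product w \<Longrightarrow> w \<in> GI"
  unfolding GOI_prime_product_def gprime_def by (auto intro!: GI_prod)

lemma GOI_prime_product_mult:
  assumes p: "gprime p" "p \<in> GOI" and "GOI_prime_product w"
  shows "GOI_prime_product (p * w)"
proof -
  obtain P a where P: "finite P" "\<forall>r\<in>P. gprime r \<and> r \<in> GOI" and w: "w = (\<Prod>r\<in>P. r ^ a r)"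
    using \<open>GOI_prime_product w\<close> unfolding GOI_prime_product_def by blast
  define a' where "a' = a(p := Suc (if p \<in> P then a p else 0))"
  have "(\<Prod>r\<in>insert p P. r ^ a' r) = p ^ a' p * (\<Prod>r\<in>P - {p}. r ^ a r)"
    using P(1) by (simp add: prod.insert_remove a'_def)
  also have "\<dots> = p * w"
    unfolding w a'_def using P(1) by (cases "p \<in> P") (simp_all add: prod.remove)
  finally show ?thesis
    unfolding GOI_prime_product_def
    by (intro exI[of _ "insert p P"] exI[of _ a'] conjI) (use P p in auto)
qed

lemma GO_factorization:
  assumes "w \<in> GO"
  obtains u r where "u \<in> GU" "GOI_prime_product r" "w = u * r"
  using assms
proof (induction "gnorm w" arbitrary: w thesis rule: less_induct)
  case less
  show ?case
  proof (cases "w \<in> GU")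
    case True
    then show ?thesis
      using less.prems(1)[of w 1] GOI_prime_product_1 by simp
  next
    case False
    then obtain p where p: "gprime p" "p \<in> GOI" "gdvd p w"
      using GO_nonunit_has_GOI_prime_factor less.prems(2) by blast
    then obtain w' where w': "w' \<in> GI" "w = p * w'"
      unfolding gdvd_def by blast
    have pGI: "p \<in> GI"
      using p(1) unfolding gprime_def by blast
    have "w = w' * p"
      using w'(2) by (simp add: mult.commute)
    then have "gdvd w' w"
      unfolding gdvd_def using pGI by blast
    then have "w' \<in> GO"
      using GO_gdvd w'(1) less.prems(2) by blast
    have "gnorm p \<noteq> 0" "gnorm p \<noteq> 1"
      using gnorm_eq_0_iff gnorm_eq_1_iff pGI p(1) unfolding gprime_def by auto
    moreover have "gnorm w = gnorm p * gnorm w'"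
      using w' gnorm_mult pGI by simp
    moreover have "gnorm w' \<noteq> 0"
      using gnorm_eq_0_iff GO_GI GO_nonzero \<open>w' \<in> GO\<close> by blast
    ultimately have "gnorm w' < gnorm w"
      using mult_strict_right_mono[of 1 "gnorm p" "gnorm w'"] by simp
    then obtain u r where "u \<in> GU" "GOI_prime_product r" "w' = u * r"
      using less.hyps \<open>w' \<in> GO\<close> by blast
    then show ?thesis
      using less.prems(1)[of u "p * r"] GOI_prime_product_mult p w' by (simp add: algebra_simps)
  qed
qed

section \<open>The normal form\<close>

lemma Re_square_GOI:
  assumes "X \<in> GOI"
  obtains n :: int where "Re (X\<^sup>2) = 1 + 4 * of_int n"
proof -
  obtain a b where X: "X = Complex (of_int a) (of_int b)"
    using assms GOI_GO GO_GI GI_cases by blast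
  have "odd (a + b)" "a mod 4 = 1"
    using assms X Complex_in_GOI_iff by auto
  then have "a = 4 * (a div 4) + 1" "even b"
    by presburger+
  then obtain k l where "a = 4 * k + 1" "b = 2 * l"
    by (blast elim: evenE)
  then have "Re (X\<^sup>2) = 1 + 4 * of_int (4 * k\<^sup>2 + 2 * k - l\<^sup>2)"
    unfolding X by (simp add: power2_eq_square algebra_simps)
  then show ?thesis
    using that by blast
qed

lemma GOI_sum_squares_ne_four_square:
  assumes "X \<in> GOI" "Z \<in> GOI" "T \<in> GI"
  shows "X\<^sup>2 + Z\<^sup>2 \<noteq> 4 * T\<^sup>2"
proof
  assume eq: "X\<^sup>2 + Z\<^sup>2 = 4 * T\<^sup>2"
  obtain n1 :: int where "Re (X\<^sup>2) = 1 + 4 * of_int n1"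
    using Re_square_GOI assms(1) by blast
  moreover obtain n2 :: int where "Re (Z\<^sup>2) = 1 + 4 * of_int n2"
    using Re_square_GOI assms(2) by blast
  moreover obtain e f where "T = Complex (of_int e) (of_int f)"
    using assms(3) GI_cases by blast
  ultimately have "real_of_int (2 + 4 * (n1 + n2)) = of_int (4 * (e\<^sup>2 - f\<^sup>2))"
    using arg_cong[OF eq, of Re] by (simp add: power2_eq_square)
  then have "2 + 4 * (n1 + n2) = 4 * (e\<^sup>2 - f\<^sup>2)"
    by (simp only: of_int_eq_iff)
  then show False
    by presburger
qed

text \<open>Modulo 4 the imaginary part of the square of an odd a + bi is 2ab = 0, while that of
  ((1 + i) w)^2 = 2 i w^2 is twice the odd real part of w^2.\<close>

lemma sum_squares_ne_0_of_one_plus_i_times_odd: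
  assumes "O1 \<in> GO" "O2 \<in> GO" "w \<in> GO"
  shows "O1\<^sup>2 + O2\<^sup>2 + ((1 + \<i>) * w)\<^sup>2 \<noteq> 0"
proof
  assume eq: "O1\<^sup>2 + O2\<^sup>2 + ((1 + \<i>) * w)\<^sup>2 = 0"
  obtain a b c d e f where abcdef: "O1 = Complex (of_int a) (of_int b)"
    "O2 = Complex (of_int c) (of_int d)" "w = Complex (of_int e) (of_int f)"
    using assms GO_GI by (meson GI_cases)
  have odd: "odd (a + b)" "odd (c + d)" "odd (e + f)"
    using assms abcdef Complex_in_GO_iff by auto
  have "real_of_int (2 * (a * b + c * d + (e\<^sup>2 - f\<^sup>2))) = Im (O1\<^sup>2 + O2\<^sup>2 + ((1 + \<i>) * w)\<^sup>2)"
    unfolding abcdef by (simp add: power2_eq_square algebra_simps)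
  also have "\<dots> = 0"
    using eq by simp
  finally have "a * b + c * d + (e\<^sup>2 - f\<^sup>2) = 0"
    by (simp only: of_int_eq_0_iff) simp
  moreover have "odd (a * b + c * d + (e\<^sup>2 - f\<^sup>2))"
    using odd by auto
  ultimately show False
    by simp
qed

lemma even_term_normal_form:
  assumes O1: "O1 \<in> GO" and O2: "O2 \<in> GO" and E: "E \<in> GI" "E \<notin> GO" "E \<noteq> 0"
    and eq: "O1\<^sup>2 + O2\<^sup>2 + E\<^sup>2 = 0"
  obtains v a1 r where "v \<in> GU" "GOI_prime_product r" "v * E = (1 + \<i>) ^ (2 + a1) * r"
proof -
  obtain k w where w: "w \<in> GO" "E = (1 + \<i>) ^ k * w"
    using GI_one_plus_i_power_decomposition E(1,3) by blast
  have "k \<noteq> 0"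
  proof
    assume "k = 0"
    then show False
      using w E(2) by simp
  qed
  moreover have "k \<noteq> 1"
    using w eq sum_squares_ne_0_of_one_plus_i_times_odd O1 O2 by auto
  ultimately have k: "k = 2 + (k - 2)"
    by simp
  obtain u r where u: "u \<in> GU" "GOI_prime_product r" "w = u * r"
    using GO_factorization w(1) by blast
  obtain v where v: "v \<in> GU" "u * v = 1"
    using GU_inverse u(1) by blast
  have "v * E = (1 + \<i>) ^ (2 + (k - 2)) * r"
    unfolding w(2) u(3) using v(2) by (subst k) (simp add: algebra_simps)
  then show ?thesis
    using that v(1) u(2) by blast
qed

lemma pythagorean_of_signed_sum_squares:
  assumes X: "X \<in> GOI" and Z: "Z \<in> GOI" and T: "T \<in> GI" and Y: "Y = 2 * T"
    and t: "t = 1 \<or> t = -1" and r: "r = 1 \<or> r = -1"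
    and eq: "X\<^sup>2 + t * Y\<^sup>2 + r * Z\<^sup>2 = 0"
  shows "X\<^sup>2 + Y\<^sup>2 = Z\<^sup>2 \<or> Z\<^sup>2 + Y\<^sup>2 = X\<^sup>2"
proof -
  have ne: "X\<^sup>2 + Z\<^sup>2 \<noteq> 4 * T\<^sup>2" "X\<^sup>2 + Z\<^sup>2 \<noteq> 4 * (\<i> * T)\<^sup>2"
    using GOI_sum_squares_ne_four_square X Z T by auto
  have i: "(\<i> * T)\<^sup>2 = - T\<^sup>2"
    by (simp add: power_mult_distrib)
  consider "t = 1" "r = 1" | "t = -1" "r = 1" | "t = 1" "r = -1" | "t = -1" "r = -1"
    using t r by blast
  then show ?thesis
  proof cases
    case 1
    then have "X\<^sup>2 + Z\<^sup>2 = 4 * (\<i> * T)\<^sup>2"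
      using eq i unfolding Y by algebra
    then show ?thesis
      using ne(2) by blast
  next
    case 2
    then have "X\<^sup>2 + Z\<^sup>2 = 4 * T\<^sup>2"
      using eq unfolding Y by algebra
    then show ?thesis
      using ne(1) by blast
  next
    case 3
    then have "X\<^sup>2 + Y\<^sup>2 = Z\<^sup>2"
      using eq by algebra
    then show ?thesis ..
  next
    case 4
    then have "Z\<^sup>2 + Y\<^sup>2 = X\<^sup>2"
      using eq by algebra
    then show ?thesis ..
  qed
qed

definition normal_pythagorean_triple :: "complex \<Rightarrow> complex \<Rightarrow> complex \<Rightarrow> bool" where
  "normal_pythagorean_triple X Y Z \<longleftrightarrow>
     X\<^sup>2 + Y\<^sup>2 = Z\<^sup>2 \<and> X \<in> GOI \<and> Z \<in> GOI \<and>
     (\<exists>a1 P a. finite P \<and> (\<forall>p\<in>P. gprime p \<and> p \<in> GOI) \<and>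
        Y = (1 + \<i>) ^ (2 + a1) * (\<Prod>p\<in>P. p ^ a p)) \<and>
     gcoprime X Y \<and> X * Y * Z \<noteq> 0"

definition has_normal_pythagorean_form :: "complex \<Rightarrow> complex \<Rightarrow> complex \<Rightarrow> bool" where
  "has_normal_pythagorean_form \<alpha> \<beta> \<gamma> \<longleftrightarrow>
     (\<exists>u1\<in>GU. \<exists>u2\<in>GU. \<exists>u3\<in>GU. \<exists>X Y Z.
        mset [X, Y, Z] = mset [u1 * \<alpha>, u2 * \<beta>, u3 * \<gamma>] \<and> normal_pythagorean_triple X Y Z)"

lemma has_normal_pythagorean_form_swap:
  assumes "has_normal_pythagorean_form \<alpha> \<gamma> \<beta>"
  shows "has_normal_pythagorean_form \<alpha> \<beta> \<gamma>"
proof -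
  obtain u1 u2 u3 X Y Z where "u1 \<in> GU" "u2 \<in> GU" "u3 \<in> GU" "normal_pythagorean_triple X Y Z"
    and "mset [X, Y, Z] = mset [u1 * \<alpha>, u2 * \<gamma>, u3 * \<beta>]"
    using assms unfolding has_normal_pythagorean_form_def by blast
  moreover from this(5) have "mset [X, Y, Z] = mset [u1 * \<alpha>, u3 * \<beta>, u2 * \<gamma>]"
    by (simp add: add_mset_commute)
  ultimately show ?thesis
    unfolding has_normal_pythagorean_form_def by blast
qed

lemma has_normal_pythagorean_form_rotate:
  assumes "has_normal_pythagorean_form \<beta> \<gamma> \<alpha>"
  shows "has_normal_pythagorean_form \<alpha> \<beta> \<gamma>"
proof -
  obtain u1 u2 u3 X Y Z where "u1 \<in> GU" "u2 \<in> GU" "u3 \<in> GU" "normal_pythagorean_triple X Y Z"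
    and "mset [X, Y, Z] = mset [u1 * \<beta>, u2 * \<gamma>, u3 * \<alpha>]"
    using assms unfolding has_normal_pythagorean_form_def by blast
  moreover from this(5) have "mset [X, Y, Z] = mset [u3 * \<alpha>, u1 * \<beta>, u2 * \<gamma>]"
    by (simp add: add_mset_commute)
  ultimately show ?thesis
    unfolding has_normal_pythagorean_form_def by blast
qed

lemma has_normal_pythagorean_form_odd_odd_even:
  assumes O1: "O1 \<in> GO" and O2: "O2 \<in> GO" and E: "E \<in> GI" "E \<notin> GO" "E \<noteq> 0"
    and eq: "O1\<^sup>2 + O2\<^sup>2 + E\<^sup>2 = 0" and cop1: "gcoprime O1 E" and cop2: "gcoprime O2 E"
  shows "has_normal_pythagorean_form O1 O2 E"
proof -
  obtain v2 a1 r where v2: "v2 \<in> GU" and r: "GOI_prime_product r"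
    and Y_eq: "v2 * E = (1 + \<i>) ^ (2 + a1) * r"
    using even_term_normal_form[OF O1 O2 E eq] by blast
  obtain v1 where v1: "v1 \<in> GU" "v1 * O1 \<in> GOI"
    using GO_unit_mult_in_GOI O1 by blast
  obtain v3 where v3: "v3 \<in> GU" "v3 * O2 \<in> GOI"
    using GO_unit_mult_in_GOI O2 by blast
  define X Y Z where "X = v1 * O1" and "Y = v2 * E" and "Z = v3 * O2"
  define T where "T = \<i> * (1 + \<i>) ^ a1 * r"
  have "T \<in> GI"
    unfolding T_def using GOI_prime_product_GI r by simp
  moreover have "Y = 2 * T"
    unfolding Y_def Y_eq T_def by (simp add: power_add power2_eq_square algebra_simps)
  moreover have "(v1 * v2)\<^sup>2 = 1 \<or> (v1 * v2)\<^sup>2 = -1" "(v1 * v3)\<^sup>2 = 1 \<or> (v1 * v3)\<^sup>2 = -1"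
    using GU_square GU_mult v1 v2 v3 by blast+
  moreover have "X\<^sup>2 + (v1 * v2)\<^sup>2 * Y\<^sup>2 + (v1 * v3)\<^sup>2 * Z\<^sup>2 = 0"
  proof -
    have "v2 ^ 4 = 1" "v3 ^ 4 = 1"
      using GU_power4 v2 v3 by blast+
    then have "X\<^sup>2 + (v1 * v2)\<^sup>2 * Y\<^sup>2 + (v1 * v3)\<^sup>2 * Z\<^sup>2 = v1\<^sup>2 * (O1\<^sup>2 + O2\<^sup>2 + E\<^sup>2)"
      unfolding X_def Y_def Z_def by algebra
    then show ?thesis
      using eq by simp
  qed
  ultimately have pyth: "X\<^sup>2 + Y\<^sup>2 = Z\<^sup>2 \<or> Z\<^sup>2 + Y\<^sup>2 = X\<^sup>2"
    using pythagorean_of_signed_sum_squares v1(2) v3(2) unfolding X_def Z_def by blast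
  have "\<exists>a1 P a. finite P \<and> (\<forall>p\<in>P. gprime p \<and> p \<in> GOI) \<and>
      Y = (1 + \<i>) ^ (2 + a1) * (\<Prod>p\<in>P. p ^ a p)"
    using r Y_eq unfolding Y_def GOI_prime_product_def by blast
  moreover have "gcoprime X Y" "gcoprime Z Y"
    unfolding X_def Y_def Z_def using gcoprime_unit_mult cop1 cop2 v1 v2 v3 by blast+
  moreover have "X * Y * Z \<noteq> 0"
    unfolding X_def Y_def Z_def using GU_nonzero GO_nonzero v1 v2 v3 O1 O2 E(3) by simp
  ultimately have "normal_pythagorean_triple X Y Z \<or> normal_pythagorean_triple Z Y X"
    using pyth v1(2) v3(2) unfolding normal_pythagorean_triple_def X_def Z_def
    by (auto simp: ac_simps)
  moreover have "mset [X, Y, Z] = mset [v1 * O1, v3 * O2, v2 * E]"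
    "mset [Z, Y, X] = mset [v1 * O1, v3 * O2, v2 * E]"
    unfolding X_def Y_def Z_def by (simp_all add: add_mset_commute)
  ultimately show ?thesis
    unfolding has_normal_pythagorean_form_def using v1(1) v2 v3(1) by blast
qed

lemma has_normal_pythagorean_form_of_sum_squares_zero:
  assumes G: "\<alpha> \<in> GI" "\<beta> \<in> GI" "\<gamma> \<in> GI" and eq: "\<alpha>\<^sup>2 + \<beta>\<^sup>2 + \<gamma>\<^sup>2 = 0"
    and nz: "\<alpha> * \<beta> * \<gamma> \<noteq> 0" and cop: "gcoprime \<alpha> \<beta>"
  shows "has_normal_pythagorean_form \<alpha> \<beta> \<gamma>"
proof -
  have cop_\<alpha>\<gamma>: "gcoprime \<alpha> \<gamma>"
    using gcoprime_sum_squares_zero G eq cop by blast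
  have cop_\<beta>\<gamma>: "gcoprime \<beta> \<gamma>"
    using gcoprime_sum_squares_zero[of \<beta> \<alpha> \<gamma>] G eq gcoprime_sym[OF cop] by (simp add: ac_simps)
  have "\<not> (\<alpha> \<notin> GO \<and> \<beta> \<notin> GO)"
    using cop one_plus_i_not_GU GO_iff_not_one_plus_i_gdvd G unfolding gcoprime_def by auto
  then consider "\<alpha> \<in> GO" "\<beta> \<in> GO" "\<gamma> \<notin> GO" | "\<alpha> \<in> GO" "\<gamma> \<in> GO" "\<beta> \<notin> GO"
    | "\<beta> \<in> GO" "\<gamma> \<in> GO" "\<alpha> \<notin> GO"
    using sum_squares_zero_parity[OF G eq] by blast
  then show ?thesis
  proof cases
    case 1
    then show ?thesis
      using has_normal_pythagorean_form_odd_odd_even nz G eq cop_\<alpha>\<gamma> cop_\<beta>\<gamma> by simp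
  next
    case 2
    then have "has_normal_pythagorean_form \<alpha> \<gamma> \<beta>"
      using has_normal_pythagorean_form_odd_odd_even nz G eq cop gcoprime_sym[OF cop_\<beta>\<gamma>]
      by (simp add: ac_simps)
    then show ?thesis
      by (rule has_normal_pythagorean_form_swap)
  next
    case 3
    then have "has_normal_pythagorean_form \<beta> \<gamma> \<alpha>"
      using has_normal_pythagorean_form_odd_odd_even nz G eq gcoprime_sym[OF cop]
        gcoprime_sym[OF cop_\<alpha>\<gamma>] by (simp add: ac_simps)
    then show ?thesis
      by (rule has_normal_pythagorean_form_rotate)
  qed
qed

theorem theorem4p3:
  shows "(\<forall>\<alpha>\<in>GI. \<forall>\<beta>\<in>GI. \<forall>\<gamma>\<in>GI.
            \<alpha>^2 + \<beta>^2 + \<gamma>^2 = 0 \<and> \<alpha> * \<beta> * \<gamma> \<noteq> 0 \<and> gcoprime \<alpha> \<beta> \<longrightarrow>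
            (\<exists>u1\<in>GU. \<exists>u2\<in>GU. \<exists>u3\<in>GU. \<exists>X Y Z.
               mset [X, Y, Z] = mset [u1 * \<alpha>, u2 * \<beta>, u3 * \<gamma>] \<and>
               X^2 + Y^2 = Z^2 \<and> X \<in> GOI \<and> Z \<in> GOI \<and>
               (\<exists>a1::nat. \<exists>P::complex set. \<exists>a::complex \<Rightarrow> nat.
                  finite P \<and> (\<forall>p\<in>P. gprime p \<and> p \<in> GOI) \<and>
                  Y = (1 + \<i>) ^ (2 + a1) * (\<Prod>p\<in>P. p ^ a p)) \<and>
               gcoprime X Y \<and> X * Y * Z \<noteq> 0)) \<and>
         (\<forall>X\<in>GI. \<forall>Y\<in>GI. \<forall>Z\<in>GI.
            X^2 + Y^2 = Z^2 \<and> gcoprime X Y \<and> X * Y * Z \<noteq> 0 \<longrightarrow>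
            X^2 + Y^2 + (\<i> * Z)^2 = 0 \<and> \<i> * Z \<in> GI \<and> gcoprime X Y \<and> X * Y * (\<i> * Z) \<noteq> 0)"
proof -
  have "has_normal_pythagorean_form \<alpha> \<beta> \<gamma>"
    if "\<alpha> \<in> GI" "\<beta> \<in> GI" "\<gamma> \<in> GI" "\<alpha>^2 + \<beta>^2 + \<gamma>^2 = 0 \<and> \<alpha> * \<beta> * \<gamma> \<noteq> 0 \<and> gcoprime \<alpha> \<beta>"
    for \<alpha> \<beta> \<gamma>
    using that has_normal_pythagorean_form_of_sum_squares_zero by blast
  moreover have "(\<i> * z)\<^sup>2 = - z\<^sup>2" for z :: complex
    by (simp add: power_mult_distrib)
  ultimately show ?thesis
    unfolding has_normal_pythagorean_form_def normal_pythagorean_triple_def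
    by - (rule conjI, blast, auto)
qed

end
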